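(* Let $G$ be a DAG with maximum in-degree $\Delta_{in}$, and let $k,g,r$ be positive integers with $r\ge\Delta_{in}+1$. Let $\sigma=(T_1,\dots,T_s)$ be a non-idle greedy schedule of $G$ on $k$ processors. Consider the MPP pebbling strategy that, for $t=1,\dots,s$ in order, assigns the (at most $k$) nodes of $T_t$ to distinct processors and, for each such node $v$ on processor $p$: loads all in-neighbors of $v$ from slow memory into $p$ (via (R2) steps, in parallel across processors), computes $v$ on $p$ (one parallel (R3) step for all of $T_t$), saves $v$ to slow memory (one parallel (R1) step), and then deletes all red pebbles. The cost of this strategy is at most $2\cdot\bigl(g\cdot(\Delta_{in}+1)+1\bigr)\cdot\mathrm{OPT}$.
   Context: Multiprocessor red-blue pebbling (MPP). Input: a DAG $G=(V,E)$ with $n=|V|$ and positive integers $k$ (number of processors), $r$ (fast-memory size per processor), $g$ (cost of an I/O step). $\Delta_{in}$ denotes the maximum in-degree of $G$; sources/sinks are nodes of in-degree/out-degree $0$. A configuration is a tuple $(R^1,\dots,R^k,B)$ of subsets of $V$ ($R^j$ = nodes carrying a red pebble of processor $j$, $B$ = nodes carrying a blue pebble); it is valid if $|R^j|\le r$ for all $j$. The initial configuration has all sets empty; a configuration is terminal if every sink lies in $B\cup\bigcup_j R^j$. The transition rules are: (R1) for some $m\le k$, pairwise distinct processors $j_1,\dots,j_m$ and nodes $v_1,\dots,v_m$ with $v_i\in R^{j_i}$, add each $v_i$ to $B$ (cost $g$); (R2) for some $m\le k$, pairwise distinct processors $j_1,\dots,j_m$ and nodes $v_1,\dots,v_m\in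 B$, add each $v_i$ to $R^{j_i}$ (cost $g$); (R3) for some $m\le k$, pairwise distinct processors $j_1,\dots,j_m$ and nodes $v_1,\dots,v_m$ such that every in-neighbor of $v_i$ lies in $R^{j_i}$, add each $v_i$ to $R^{j_i}$ (cost $1$); (R4) remove a single red or blue pebble (cost $0$). A pebbling strategy is a sequence of valid configurations starting at the initial configuration and ending at a terminal one, each obtained from its predecessor by one rule; its cost is the sum of the costs of the rules applied. $\mathrm{OPT}$ denotes the minimum cost of a pebbling strategy. Applications of (R1),(R2) are called I/O steps and applications of (R3) compute steps. A non-idle greedy schedule of $G$ on $k$ processors is a partition of $V$ into nonempty sets $T_1,\dots,T_s$ with $|T_t|\le k$ such that every in-neighbor of a node in $T_t$ lies in $T_1\cup\dots\cup T_{t-1}$, and such that for every $t$ with $|T_t|<k$, every node not in $T_1\cup\dots\cup T_{t-1}$ all of whose in-neighbors lie in $T_1\cup\dots\cup T_{t-1}$ belongs to $T_t$. *)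

theory Defs
  imports Main
begin

definition in_nbrs :: "('v \<times> 'v) set \<Rightarrow> 'v \<Rightarrow> 'v set" where
  "in_nbrs E v = {u. (u, v) \<in> E}"

definition is_dag :: "'v set \<Rightarrow> ('v \<times> 'v) set \<Rightarrow> bool" where
  "is_dag V E \<longleftrightarrow> finite V \<and> E \<subseteq> V \<times> V \<and> acyclic E"

definition max_indeg :: "'v set \<Rightarrow> ('v \<times> 'v) set \<Rightarrow> nat" where
  "max_indeg V E = Max (insert 0 ((\<lambda>v. card (in_nbrs E v)) ` V))"

definition sinks :: "'v set \<Rightarrow> ('v \<times> 'v) set \<Rightarrow> 'v set" where
  "sinks V E = {v \<in> V. \<forall>w. (v, w) \<notin> E}"

text \<open>A configuration: red pebble sets R j for processors j < k (sets for j >= k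
  are never touched and stay empty), and the blue pebble set B.\<close>

type_synonym 'v conf = "(nat \<Rightarrow> 'v set) \<times> 'v set"

definition init_conf :: "'v conf" where
  "init_conf = (\<lambda>_. {}, {})"

definition valid_conf :: "nat \<Rightarrow> nat \<Rightarrow> 'v conf \<Rightarrow> bool" where
  "valid_conf k r C \<longleftrightarrow> (\<forall>j<k. card (fst C j) \<le> r)"

definition terminal_conf :: "'v set \<Rightarrow> ('v \<times> 'v) set \<Rightarrow> nat \<Rightarrow> 'v conf \<Rightarrow> bool" where
  "terminal_conf V E k C \<longleftrightarrow> (\<forall>v \<in> sinks V E. v \<in> snd C \<or> (\<exists>j<k. v \<in> fst C j))"

text \<open>A parallel action: a partial map f from pairwise distinct processors
  (its domain, a nonempty subset of {0..<k}) to nodes.\<close>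

definition par_action :: "nat \<Rightarrow> (nat \<Rightarrow> 'v option) \<Rightarrow> bool" where
  "par_action k f \<longleftrightarrow> dom f \<subseteq> {..<k} \<and> dom f \<noteq> {}"

definition mpp_step ::
  "'v set \<Rightarrow> ('v \<times> 'v) set \<Rightarrow> nat \<Rightarrow> nat \<Rightarrow> 'v conf \<Rightarrow> nat \<Rightarrow> 'v conf \<Rightarrow> bool" where
  "mpp_step V E k g C c C' \<longleftrightarrow>
     \<comment> \<open>(R1) save to slow memory\<close>
     (\<exists>f. par_action k f \<and> (\<forall>j v. f j = Some v \<longrightarrow> v \<in> fst C j) \<and>
          C' = (fst C, snd C \<union> ran f) \<and> c = g)
   \<or> \<comment> \<open>(R2) load from slow memory\<close>
     (\<exists>f. par_action k f \<and> (\<forall>j v. f j = Some v \<longrightarrow> v \<in> snd C) \<and>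
          C' = (\<lambda>j. fst C j \<union> set_option (f j), snd C) \<and> c = g)
   \<or> \<comment> \<open>(R3) compute\<close>
     (\<exists>f. par_action k f \<and>
          (\<forall>j v. f j = Some v \<longrightarrow> v \<in> V \<and> in_nbrs E v \<subseteq> fst C j) \<and>
          C' = (\<lambda>j. fst C j \<union> set_option (f j), snd C) \<and> c = 1)
   \<or> \<comment> \<open>(R4) remove a single pebble\<close>
     (((\<exists>j<k. \<exists>v \<in> fst C j. C' = ((fst C)(j := fst C j - {v}), snd C)) \<or>
       (\<exists>v \<in> snd C. C' = (fst C, snd C - {v}))) \<and> c = 0)"

text \<open>A strategy is recorded as the list of (cost of applied rule, resulting configuration)
  starting from the initial configuration.\<close>

definition strat_confs :: "(nat \<times> 'v conf) list \<Rightarrow> 'v conf list" where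
  "strat_confs ss = init_conf # map snd ss"

definition is_strategy ::
  "'v set \<Rightarrow> ('v \<times> 'v) set \<Rightarrow> nat \<Rightarrow> nat \<Rightarrow> nat \<Rightarrow> (nat \<times> 'v conf) list \<Rightarrow> bool" where
  "is_strategy V E k r g ss \<longleftrightarrow>
     (\<forall>i < length ss. mpp_step V E k g (strat_confs ss ! i) (fst (ss ! i)) (strat_confs ss ! Suc i)) \<and>
     (\<forall>C \<in> set (strat_confs ss). valid_conf k r C) \<and>
     terminal_conf V E k (last (strat_confs ss))"

definition strat_cost :: "(nat \<times> 'v conf) list \<Rightarrow> nat" where
  "strat_cost ss = sum_list (map fst ss)"

definition OPT :: "'v set \<Rightarrow> ('v \<times> 'v) set \<Rightarrow> nat \<Rightarrow> nat \<Rightarrow> nat \<Rightarrow> nat" where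
  "OPT V E k r g = Inf {strat_cost ss | ss. is_strategy V E k r g ss}"

definition done_before :: "'v set list \<Rightarrow> nat \<Rightarrow> 'v set" where
  "done_before Ts t = \<Union> (set (take t Ts))"

definition nonidle_greedy_schedule ::
  "'v set \<Rightarrow> ('v \<times> 'v) set \<Rightarrow> nat \<Rightarrow> 'v set list \<Rightarrow> bool" where
  "nonidle_greedy_schedule V E k Ts \<longleftrightarrow>
     \<Union> (set Ts) = V \<and>
     (\<forall>t < length Ts. Ts ! t \<noteq> {} \<and> card (Ts ! t) \<le> k) \<and>
     (\<forall>t < length Ts. \<forall>t' < length Ts. t \<noteq> t' \<longrightarrow> Ts ! t \<inter> Ts ! t' = {}) \<and>
     (\<forall>t < length Ts. \<forall>v \<in> Ts ! t. in_nbrs E v \<subseteq> done_before Ts t) \<and>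
     (\<forall>t < length Ts. card (Ts ! t) < k \<longrightarrow>
        (\<forall>v \<in> V - done_before Ts t. in_nbrs E v \<subseteq> done_before Ts t \<longrightarrow> v \<in> Ts ! t))"

text \<open>Round for the node set T, with processor assignment p (injective on T),
  an enumeration nb v of the in-neighbours of each node v, and blue set B at
  the start of the round (all red sets are empty at the start of a round).\<close>

definition load_conf ::
  "'v set \<Rightarrow> ('v \<Rightarrow> nat) \<Rightarrow> ('v \<Rightarrow> 'v list) \<Rightarrow> 'v set \<Rightarrow> nat \<Rightarrow> 'v conf" where
  "load_conf T p nb B i =
     (\<lambda>j. \<Union> {set (take (Suc i) (nb v)) | v. v \<in> T \<and> p v = j}, B)"

definition comp_reds :: "'v set \<Rightarrow> ('v \<Rightarrow> nat) \<Rightarrow> ('v \<Rightarrow> 'v list) \<Rightarrow> nat \<Rightarrow> 'v set" where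
  "comp_reds T p nb j = \<Union> {insert v (set (nb v)) | v. v \<in> T \<and> p v = j}"

definition del_order :: "nat \<Rightarrow> 'v set \<Rightarrow> ('v \<Rightarrow> nat) \<Rightarrow> ('v \<Rightarrow> 'v list) \<Rightarrow> (nat \<times> 'v) list" where
  "del_order k T p nb =
     (SOME L. distinct L \<and> set L = {(j, u). j < k \<and> u \<in> comp_reds T p nb j})"

definition round_steps ::
  "nat \<Rightarrow> nat \<Rightarrow> 'v set \<Rightarrow> ('v \<Rightarrow> nat) \<Rightarrow> ('v \<Rightarrow> 'v list) \<Rightarrow> 'v set \<Rightarrow> (nat \<times> 'v conf) list" where
  "round_steps k g T p nb B =
     (let D = Max (insert 0 ((\<lambda>v. length (nb v)) ` T));
          L = del_order k T p nb
      in map (\<lambda>i. (g, load_conf T p nb B i)) [0..<D]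
         @ [(1, (comp_reds T p nb, B)), (g, (comp_reds T p nb, B \<union> T))]
         @ map (\<lambda>m. (0, (\<lambda>j. comp_reds T p nb j - {u. (j, u) \<in> set (take (Suc m) L)}, B \<union> T)))
               [0..<length L])"

definition greedy_strategy ::
  "nat \<Rightarrow> nat \<Rightarrow> 'v set list \<Rightarrow> (nat \<Rightarrow> 'v \<Rightarrow> nat) \<Rightarrow> ('v \<Rightarrow> 'v list) \<Rightarrow> (nat \<times> 'v conf) list" where
  "greedy_strategy k g Ts proc nb =
     concat (map (\<lambda>t. round_steps k g (Ts ! t) (proc t) nb (done_before Ts t)) [0..<length Ts])"

end

theory Submission
  imports Defs
begin

text \<open>Upper bound: in one round of the greedy strategy every processor loads at most
  \<open>\<Delta>\<^sub>i\<^sub>n\<close> in-neighbours, one load per parallel I/O step, and then computes and saves once,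
  so a round costs at most \<open>g \<Delta>\<^sub>i\<^sub>n + 1 + g\<close>.

  Lower bound: a strategy of cost \<open>c\<close> computes every node (the sinks end up pebbled, and a
  node can only be computed after its in-neighbours), at most \<open>k\<close> per compute step, so at most
  \<open>c\<close> rounds are full. It also passes at most \<open>c\<close> non-full rounds: a non-full greedy round
  contains every node all of whose in-neighbours are done, so a compute step whose inputs lie
  before such a round only produces nodes up to that round. Hence the number of rounds is at
  most \<open>2 OPT\<close>.\<close>

fun mpp_run ::
  "'v set \<Rightarrow> ('v \<times> 'v) set \<Rightarrow> nat \<Rightarrow> nat \<Rightarrow> 'v conf \<Rightarrow> (nat \<times> 'v conf) list \<Rightarrow> bool" where
  "mpp_run V E k g C [] \<longleftrightarrow> True"
| "mpp_run V E k g C ((c, C') # ss) \<longleftrightarrow> mpp_step V E k g C c C' \<and> mpp_run V E k g C' ss"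

definition end_conf :: "'v conf \<Rightarrow> (nat \<times> 'v conf) list \<Rightarrow> 'v conf" where
  "end_conf C ss = last (C # map snd ss)"

lemma mpp_run_iff_nth:
  "mpp_run V E k g C ss \<longleftrightarrow>
   (\<forall>i<length ss. mpp_step V E k g ((C # map snd ss) ! i) (fst (ss ! i)) ((C # map snd ss) ! Suc i))"
proof (induction ss arbitrary: C)
  case Nil
  then show ?case by simp
next
  case (Cons x ss)
  then show ?case
    by (cases x) (auto simp: less_Suc_eq_0_disj)
qed

lemma is_strategy_iff_mpp_run:
  "is_strategy V E k r g ss \<longleftrightarrow>
     mpp_run V E k g init_conf ss \<and>
     (\<forall>C \<in> set (strat_confs ss). valid_conf k r C) \<and>
     terminal_conf V E k (end_conf init_conf ss)"
  unfolding is_strategy_def mpp_run_iff_nth strat_confs_def end_conf_def by simp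

lemma end_conf_append: "end_conf C (xs @ ys) = end_conf (end_conf C xs) ys"
  unfolding end_conf_def by (cases ys) auto

lemma mpp_run_append:
  "mpp_run V E k g C (xs @ ys) \<longleftrightarrow> mpp_run V E k g C xs \<and> mpp_run V E k g (end_conf C xs) ys"
  unfolding end_conf_def by (induction xs arbitrary: C) auto

lemma end_conf_map_upt: "end_conf (G 0) (map (\<lambda>i. (c i, G (Suc i))) [0..<n]) = G n"
  unfolding end_conf_def by (induction n) auto

lemma mpp_run_map_upt:
  assumes "\<And>i. i < n \<Longrightarrow> mpp_step V E k g (G i) (c i) (G (Suc i))"
  shows "mpp_run V E k g (G 0) (map (\<lambda>i. (c i, G (Suc i))) [0..<n])"
  using assms
proof (induction n)
  case 0
  then show ?case by simp
next
  case (Suc n)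
  then show ?case by (simp add: mpp_run_append end_conf_map_upt)
qed

lemma strat_cost_concat: "strat_cost (concat xss) = (\<Sum>xs\<leftarrow>xss. strat_cost xs)"
  by (induction xss) (simp_all add: strat_cost_def)

lemma OPT_attained:
  assumes "is_strategy V E k r g ss"
  obtains ss0 where "is_strategy V E k r g ss0" and "strat_cost ss0 = OPT V E k r g"
proof -
  have "OPT V E k r g \<in> {strat_cost ss | ss. is_strategy V E k r g ss}"
    unfolding OPT_def by (rule Inf_nat_def1) (use assms in blast)
  then show ?thesis using that by force
qed

section \<open>Greedy schedules\<close>

lemma done_before_Suc:
  "t < length Ts \<Longrightarrow> done_before Ts (Suc t) = done_before Ts t \<union> Ts ! t"
  unfolding done_before_def by (auto simp: take_Suc_conv_app_nth)

lemma done_before_mono: "t \<le> t' \<Longrightarrow> done_before Ts t \<subseteq> done_before Ts t'"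
  unfolding done_before_def by (meson Sup_subset_mono set_take_subset_set_take)

lemma done_before_length: "done_before Ts (length Ts) = \<Union> (set Ts)"
  unfolding done_before_def by simp

context
  fixes V :: "'v set" and E :: "('v \<times> 'v) set" and k :: nat and Ts :: "'v set list"
  assumes sched: "nonidle_greedy_schedule V E k Ts"
begin

lemma schedule_nth_subset: "t < length Ts \<Longrightarrow> Ts ! t \<subseteq> V"
  using sched unfolding nonidle_greedy_schedule_def by (metis Union_upper nth_mem)

lemma schedule_nth_disjoint_done_before:
  assumes t: "t < length Ts"
  shows "Ts ! t \<inter> done_before Ts t = {}"
proof -
  have "Ts ! t \<inter> Ts ! t' = {}" if "t' < t" for t'
    using sched t that unfolding nonidle_greedy_schedule_def by auto
  then show ?thesis
    using t unfolding done_before_def by (auto simp: in_set_conv_nth) blast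
qed

lemma nonfull_round_completes:
  assumes "t < length Ts" and "card (Ts ! t) < k"
    and "v \<in> V" and "in_nbrs E v \<subseteq> done_before Ts t"
  shows "v \<in> done_before Ts (Suc t)"
  using sched assms unfolding nonidle_greedy_schedule_def done_before_Suc[OF assms(1)] by blast

lemma card_eq_sum_rounds:
  assumes "finite V"
  shows "card V = (\<Sum>t<length Ts. card (Ts ! t))"
proof -
  have "V = (\<Union>t<length Ts. Ts ! t)"
    using sched unfolding nonidle_greedy_schedule_def by (auto simp: in_set_conv_nth) (metis nth_mem)
  moreover have "finite (Ts ! t)" if "t < length Ts" for t
    using schedule_nth_subset[OF that] assms by (rule finite_subset)
  moreover have "Ts ! t \<inter> Ts ! t' = {}" if "t < length Ts" "t' < length Ts" "t \<noteq> t'" for t t'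
    using sched that unfolding nonidle_greedy_schedule_def by blast
  ultimately show ?thesis by (simp add: card_UN_disjoint)
qed

lemma full_rounds_card_le:
  assumes "finite V"
  shows "k * card {t. t < length Ts \<and> k \<le> card (Ts ! t)} \<le> card V"
proof -
  let ?F = "{t. t < length Ts \<and> k \<le> card (Ts ! t)}"
  have "k * card ?F = (\<Sum>t\<in>?F. k)" by simp
  also have "\<dots> \<le> (\<Sum>t\<in>?F. card (Ts ! t))" by (rule sum_mono) simp
  also have "\<dots> \<le> (\<Sum>t<length Ts. card (Ts ! t))" by (rule sum_mono2) auto
  finally show ?thesis using card_eq_sum_rounds[OF assms] by simp
qed

end

definition nonfull_rounds :: "nat \<Rightarrow> 'v set list \<Rightarrow> nat \<Rightarrow> nat" where
  "nonfull_rounds k Ts t = card {t'. t' < t \<and> card (Ts ! t') < k}"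

lemma nonfull_rounds_Suc:
  "nonfull_rounds k Ts (Suc t) = nonfull_rounds k Ts t + (if card (Ts ! t) < k then 1 else 0)"
proof -
  have "{t'. t' < Suc t \<and> card (Ts ! t') < k} =
        {t'. t' < t \<and> card (Ts ! t') < k} \<union> (if card (Ts ! t) < k then {t} else {})"
    by (auto simp: less_Suc_eq)
  then show ?thesis unfolding nonfull_rounds_def by auto
qed

lemma nonfull_rounds_witness:
  "Suc c \<le> nonfull_rounds k Ts t \<Longrightarrow>
   \<exists>t'<t. card (Ts ! t') < k \<and> c \<le> nonfull_rounds k Ts t'"
proof (induction t)
  case 0
  then show ?case by (simp add: nonfull_rounds_def)
next
  case (Suc t)
  then show ?case
    by (cases "card (Ts ! t) < k") (auto simp: nonfull_rounds_Suc less_Suc_eq)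
qed

lemma length_eq_full_plus_nonfull:
  "length Ts = card {t. t < length Ts \<and> k \<le> card (Ts ! t)} + nonfull_rounds k Ts (length Ts)"
proof -
  have "{..<length Ts} = {t. t < length Ts \<and> k \<le> card (Ts ! t)} \<union> {t. t < length Ts \<and> card (Ts ! t) < k}"
    by auto
  then show ?thesis
    unfolding nonfull_rounds_def by (metis (no_types, lifting) card_Un_disjoint card_lessThan
        disjoint_iff finite_Un finite_lessThan mem_Collect_eq not_le)
qed

section \<open>The lower bound\<close>

definition pebbled :: "nat \<Rightarrow> 'v conf \<Rightarrow> 'v set" where
  "pebbled k C = snd C \<union> (\<Union>j<k. fst C j)"

text \<open>K stands for the nodes computed by a run of cost c ending in C. The last conjunct says
  that every unit of cost lets the computation overtake at most one non-full round of the
  greedy schedule.\<close>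

definition computed_within ::
  "'v set \<Rightarrow> ('v \<times> 'v) set \<Rightarrow> nat \<Rightarrow> 'v set list \<Rightarrow> 'v conf \<Rightarrow> nat \<Rightarrow> 'v set \<Rightarrow> bool" where
  "computed_within V E k Ts C c K \<longleftrightarrow>
     finite K \<and> K \<subseteq> V \<and> pebbled k C \<subseteq> K \<and> (\<forall>v\<in>K. in_nbrs E v \<subseteq> K) \<and> card K \<le> k * c \<and>
     (\<forall>t \<le> length Ts. c \<le> nonfull_rounds k Ts t \<longrightarrow> K \<subseteq> done_before Ts t)"

lemma computed_within_init: "computed_within V E k Ts init_conf 0 {}"
  unfolding computed_within_def pebbled_def init_conf_def by simp

lemma computed_within_mono:
  "computed_within V E k Ts C c K \<Longrightarrow> pebbled k C' \<subseteq> K \<Longrightarrow> c \<le> c' \<Longrightarrow>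
   computed_within V E k Ts C' c' K"
  unfolding computed_within_def by (meson dual_order.trans mult_le_mono2)

lemma card_ran_le:
  assumes "dom f \<subseteq> {..<k}"
  shows "card (ran f) \<le> k"
proof -
  have "ran f = (\<lambda>j. the (f j)) ` dom f" by (force simp: ran_def dom_def)
  then have "card (ran f) \<le> card (dom f)"
    by (metis assms card_image_le finite_lessThan finite_subset)
  also have "\<dots> \<le> k" using assms by (metis card_lessThan card_mono finite_lessThan)
  finally show ?thesis .
qed

lemma pebbled_add_reds:
  "dom f \<subseteq> {..<k} \<Longrightarrow> pebbled k (\<lambda>j. fst C j \<union> set_option (f j), snd C) = pebbled k C \<union> ran f"
  unfolding pebbled_def ran_def by auto

lemma computed_within_compute:
  assumes sched: "nonidle_greedy_schedule V E k Ts"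
    and f: "par_action k f" "\<forall>j v. f j = Some v \<longrightarrow> v \<in> V \<and> in_nbrs E v \<subseteq> fst C j"
    and K: "computed_within V E k Ts C c K"
  shows "computed_within V E k Ts (\<lambda>j. fst C j \<union> set_option (f j), snd C) (c + 1) (K \<union> ran f)"
proof -
  have dom: "dom f \<subseteq> {..<k}" using f(1) unfolding par_action_def by simp
  have ranV: "ran f \<subseteq> V" using f(2) by (auto simp: ran_def)
  have ran_in_nbrs: "in_nbrs E v \<subseteq> K" if "v \<in> ran f" for v
  proof -
    obtain j where j: "f j = Some v" using \<open>v \<in> ran f\<close> by (auto simp: ran_def)
    with dom have "fst C j \<subseteq> K" using K unfolding computed_within_def pebbled_def by blast
    with j f(2) show ?thesis by blast
  qed
  have card: "card (K \<union> ran f) \<le> k * (c + 1)"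
    using card_Un_le[of K "ran f"] card_ran_le[OF dom] K unfolding computed_within_def by simp
  have progress: "K \<union> ran f \<subseteq> done_before Ts t"
    if t: "t \<le> length Ts" "c + 1 \<le> nonfull_rounds k Ts t" for t
  proof -
    obtain t' where t': "t' < t" "card (Ts ! t') < k" "c \<le> nonfull_rounds k Ts t'"
      using nonfull_rounds_witness t(2) by fastforce
    have "K \<subseteq> done_before Ts t'" using K t t' unfolding computed_within_def by simp
    then have "ran f \<subseteq> done_before Ts (Suc t')"
      using nonfull_round_completes[OF sched _ t'(2)] ranV ran_in_nbrs t t' by fastforce
    then show ?thesis
      using \<open>K \<subseteq> done_before Ts t'\<close> done_before_mono[of t' t] done_before_mono[of "Suc t'" t] t'
      by fastforce
  qed
  show ?thesis
    using K ranV ran_in_nbrs card progress finite_ran[of f] pebbled_add_reds[OF dom, of C] f(1)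
    unfolding computed_within_def par_action_def
    by (auto intro: finite_subset[OF _ finite_lessThan[of k]])
qed

lemma pebbled_mpp_step:
  assumes "mpp_step V E k g C c C'"
  shows "pebbled k C' \<subseteq> pebbled k C \<or>
    (\<exists>f. par_action k f \<and> (\<forall>j v. f j = Some v \<longrightarrow> v \<in> V \<and> in_nbrs E v \<subseteq> fst C j) \<and>
         C' = (\<lambda>j. fst C j \<union> set_option (f j), snd C) \<and> c = 1)"
  using assms unfolding mpp_step_def
proof (elim disjE exE conjE)
  fix f assume f: "par_action k f" "\<forall>j v. f j = Some v \<longrightarrow> v \<in> fst C j"
    and C': "C' = (fst C, snd C \<union> ran f)"
  have "ran f \<subseteq> pebbled k C"
  proof
    fix v assume "v \<in> ran f"
    then obtain j where "f j = Some v" by (auto simp: ran_def)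
    moreover from this have "j < k" using f(1) unfolding par_action_def by blast
    ultimately show "v \<in> pebbled k C" using f(2) unfolding pebbled_def by blast
  qed
  then show ?thesis using C' unfolding pebbled_def by auto
next
  fix f assume f: "par_action k f" "\<forall>j v. f j = Some v \<longrightarrow> v \<in> snd C"
    and C': "C' = (\<lambda>j. fst C j \<union> set_option (f j), snd C)"
  have "ran f \<subseteq> snd C" using f(2) by (auto simp: ran_def)
  then show ?thesis
    using C' f(1) pebbled_add_reds[of f k C] unfolding par_action_def pebbled_def by auto
next
  fix f assume "par_action k f" "\<forall>j v. f j = Some v \<longrightarrow> v \<in> V \<and> in_nbrs E v \<subseteq> fst C j"
    "C' = (\<lambda>j. fst C j \<union> set_option (f j), snd C)" "c = 1"
  then show ?thesis by blast
qed (auto simp: pebbled_def split: if_splits)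

lemma computed_within_step:
  assumes sched: "nonidle_greedy_schedule V E k Ts"
    and step: "mpp_step V E k g C c' C'"
    and K: "computed_within V E k Ts C c K"
  shows "\<exists>K'. computed_within V E k Ts C' (c + c') K'"
  using pebbled_mpp_step[OF step]
proof (elim disjE exE conjE)
  assume "pebbled k C' \<subseteq> pebbled k C"
  moreover have "pebbled k C \<subseteq> K" using K unfolding computed_within_def by simp
  ultimately show ?thesis using computed_within_mono[OF K, of C' "c + c'"] by auto
next
  fix f assume f: "par_action k f" "\<forall>j v. f j = Some v \<longrightarrow> v \<in> V \<and> in_nbrs E v \<subseteq> fst C j"
    and "C' = (\<lambda>j. fst C j \<union> set_option (f j), snd C)" and "c' = 1"
  then show ?thesis using computed_within_compute[OF sched f K] by blast
qed

lemma computed_within_run: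
  assumes "nonidle_greedy_schedule V E k Ts"
    and "mpp_run V E k g C ss" and "computed_within V E k Ts C c K"
  shows "\<exists>K'. computed_within V E k Ts (end_conf C ss) (c + strat_cost ss) K'"
  using assms(2,3)
proof (induction ss arbitrary: C c K)
  case Nil
  then show ?case by (auto simp: end_conf_def strat_cost_def)
next
  case (Cons x ss)
  obtain c' C' where x: "x = (c', C')" by (cases x)
  obtain K' where "computed_within V E k Ts C' (c + c') K'"
    using computed_within_step[OF assms(1)] Cons.prems x by fastforce
  moreover have "mpp_run V E k g C' ss" using Cons.prems(1) x by simp
  ultimately obtain K'' where "computed_within V E k Ts (end_conf C' ss) (c + c' + strat_cost ss) K''"
    using Cons.IH by blast
  moreover have "end_conf C (x # ss) = end_conf C' ss" "strat_cost (x # ss) = c' + strat_cost ss"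
    using x by (simp_all add: end_conf_def strat_cost_def)
  ultimately show ?case by (auto simp: add.assoc)
qed

lemma dag_subset_if_closed_contains_sinks:
  assumes dag: "is_dag V E"
    and sinks: "sinks V E \<subseteq> K" and closed: "\<forall>v\<in>K. in_nbrs E v \<subseteq> K"
  shows "V \<subseteq> K"
proof -
  have EV: "E \<subseteq> V \<times> V" and wf: "wf (E\<inverse>)"
    using dag finite_acyclic_wf_converse[of E] finite_subset[of E "V \<times> V"]
    unfolding is_dag_def by blast+
  have "v \<in> V \<longrightarrow> v \<in> K" for v
    using wf
  proof (induction v)
    case (less v)
    show ?case
    proof
      assume v: "v \<in> V"
      show "v \<in> K"
      proof (cases "v \<in> sinks V E")
        case True
        then show ?thesis using sinks by blast
      next
        case False
        then obtain w where w: "(v, w) \<in> E" using v unfolding sinks_def by blast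
        then have "w \<in> K" using less EV by blast
        then show ?thesis using closed w unfolding in_nbrs_def by blast
      qed
    qed
  qed
  then show ?thesis by blast
qed

lemma strategy_computed_within:
  assumes dag: "is_dag V E" and sched: "nonidle_greedy_schedule V E k Ts"
    and strat: "is_strategy V E k r g ss"
  obtains K where "computed_within V E k Ts (end_conf init_conf ss) (strat_cost ss) K" and "V \<subseteq> K"
proof -
  obtain K where K: "computed_within V E k Ts (end_conf init_conf ss) (strat_cost ss) K"
    using strat computed_within_run[OF sched _ computed_within_init]
    unfolding is_strategy_iff_mpp_run by fastforce
  have "sinks V E \<subseteq> pebbled k (end_conf init_conf ss)"
    using strat unfolding is_strategy_iff_mpp_run terminal_conf_def pebbled_def by blast
  then have "sinks V E \<subseteq> K" using K unfolding computed_within_def by blast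
  then have "V \<subseteq> K"
    using dag_subset_if_closed_contains_sinks[OF dag] K unfolding computed_within_def by blast
  with K that show ?thesis by blast
qed

lemma length_le_twice_strat_cost:
  assumes dag: "is_dag V E" and "k > 0"
    and sched: "nonidle_greedy_schedule V E k Ts"
    and strat: "is_strategy V E k r g ss"
  shows "length Ts \<le> 2 * strat_cost ss"
proof -
  let ?c = "strat_cost ss"
  obtain K where K: "computed_within V E k Ts (end_conf init_conf ss) ?c K" and "V \<subseteq> K"
    using strategy_computed_within[OF dag sched strat] .
  have finV: "finite V" using dag unfolding is_dag_def by simp
  have "card V \<le> k * ?c"
    using K card_mono[OF _ \<open>V \<subseteq> K\<close>] unfolding computed_within_def by (meson le_trans)
  then have full: "card {t. t < length Ts \<and> k \<le> card (Ts ! t)} \<le> ?c"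
    using full_rounds_card_le[OF sched finV] \<open>k > 0\<close> by (meson le_trans mult_le_cancel1)
  have nonfull: "nonfull_rounds k Ts (length Ts) \<le> ?c"
  proof (rule ccontr)
    assume "\<not> ?thesis"
    then obtain t where t: "t < length Ts" "?c \<le> nonfull_rounds k Ts t"
      using nonfull_rounds_witness[of ?c k Ts "length Ts"] by auto
    then have "K \<subseteq> done_before Ts t" using K unfolding computed_within_def by simp
    then have "Ts ! t \<subseteq> done_before Ts t"
      using \<open>V \<subseteq> K\<close> schedule_nth_subset[OF sched t(1)] by blast
    moreover have "Ts ! t \<noteq> {}" using sched t(1) unfolding nonidle_greedy_schedule_def by simp
    ultimately show False using schedule_nth_disjoint_done_before[OF sched t(1)] by blast
  qed
  show ?thesis using length_eq_full_plus_nonfull[of Ts k] full nonfull by simp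
qed

section \<open>One round of the greedy strategy\<close>

locale greedy_round =
  fixes V :: "'v set" and E :: "('v \<times> 'v) set" and k r g :: nat
    and T :: "'v set" and p :: "'v \<Rightarrow> nat" and nb :: "'v \<Rightarrow> 'v list" and B :: "'v set"
  assumes finite_T: "finite T" and T_nonempty: "T \<noteq> {}"
    and inj_p: "inj_on p T" and p_range: "p ` T \<subseteq> {..<k}"
    and T_subset: "T \<subseteq> V"
    and set_nb: "\<And>v. v \<in> T \<Longrightarrow> set (nb v) = in_nbrs E v"
    and in_nbrs_done: "\<And>v. v \<in> T \<Longrightarrow> in_nbrs E v \<subseteq> B"
    and nb_fits: "\<And>v. v \<in> T \<Longrightarrow> length (nb v) + 1 \<le> r"
begin

definition node_of :: "nat \<Rightarrow> 'v" where
  "node_of = the_inv_into T p"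

lemma node_of_in: "j \<in> p ` T \<Longrightarrow> node_of j \<in> T"
  unfolding node_of_def using the_inv_into_into[OF inj_p] by blast

lemma node_of_p: "v \<in> T \<Longrightarrow> node_of (p v) = v"
  unfolding node_of_def using the_inv_into_f_f[OF inj_p] .

lemma Union_assigned:
  "\<Union> {h v | v. v \<in> T \<and> p v = j} = (if j \<in> p ` T then h (node_of j) else {})"
proof (cases "j \<in> p ` T")
  case True
  then obtain v where v: "v \<in> T" "j = p v" by blast
  then have "{h w | w. w \<in> T \<and> p w = j} = {h v}" using inj_p by (auto dest: inj_onD)
  then show ?thesis using True v node_of_p by simp
qed auto

definition loaded :: "nat \<Rightarrow> 'v conf" where
  "loaded i = ((\<lambda>j. if j \<in> p ` T then set (take i (nb (node_of j))) else {}), B)"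

lemma load_conf_eq_loaded: "load_conf T p nb B i = loaded (Suc i)"
  unfolding load_conf_def loaded_def Union_assigned[of "\<lambda>v. set (take (Suc i) (nb v))"] ..

lemma comp_reds_eq:
  "comp_reds T p nb j = (if j \<in> p ` T then insert (node_of j) (set (nb (node_of j))) else {})"
  unfolding comp_reds_def by (rule Union_assigned)

definition n_loads :: nat where
  "n_loads = Max (insert 0 ((\<lambda>v. length (nb v)) ` T))"

lemma length_nb_le_n_loads: "v \<in> T \<Longrightarrow> length (nb v) \<le> n_loads"
  unfolding n_loads_def using finite_T by simp

lemma n_loads_attained: "i < n_loads \<Longrightarrow> \<exists>v\<in>T. i < length (nb v)"
  unfolding n_loads_def using finite_T by (auto simp: Max_gr_iff)

lemma load_step: "i < n_loads \<Longrightarrow> mpp_step V E k g (loaded i) g (loaded (Suc i))"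
proof -
  assume i: "i < n_loads"
  define f where
    "f j = (if j \<in> p ` T \<and> i < length (nb (node_of j)) then Some (nb (node_of j) ! i) else None)" for j
  have "par_action k f"
  proof -
    obtain v where "v \<in> T" "i < length (nb v)" using n_loads_attained[OF i] by blast
    then have "f (p v) \<noteq> None" unfolding f_def using node_of_p by simp
    moreover have "dom f \<subseteq> {..<k}" using p_range unfolding f_def dom_def by auto
    ultimately show ?thesis unfolding par_action_def by auto
  qed
  moreover have "v \<in> snd (loaded i)" if "f j = Some v" for j v
  proof -
    have j: "j \<in> p ` T" and "v \<in> set (nb (node_of j))"
      using that unfolding f_def by (auto split: if_splits)
    then show ?thesis
      using set_nb in_nbrs_done node_of_in[OF j] unfolding loaded_def by auto
  qed
  moreover have "loaded (Suc i) = (\<lambda>j. fst (loaded i) j \<union> set_option (f j), snd (loaded i))"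
    unfolding loaded_def f_def by (auto simp: fun_eq_iff take_Suc_conv_app_nth)
  ultimately show ?thesis unfolding mpp_step_def by blast
qed

definition assigned :: "nat \<Rightarrow> 'v option" where
  "assigned j = (if j \<in> p ` T then Some (node_of j) else None)"

lemma par_action_assigned: "par_action k assigned"
proof -
  have "dom assigned = p ` T" unfolding assigned_def dom_def by auto
  then show ?thesis unfolding par_action_def using p_range T_nonempty by auto
qed

lemma ran_assigned: "ran assigned = T"
  unfolding assigned_def ran_def using node_of_in node_of_p by (auto split: if_splits)

lemma compute_step: "mpp_step V E k g (loaded n_loads) 1 (comp_reds T p nb, B)"
proof -
  have "fst (loaded n_loads) j = (if j \<in> p ` T then set (nb (node_of j)) else {})" for j
    unfolding loaded_def using length_nb_le_n_loads node_of_in by auto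
  moreover have "node_of j \<in> V" if "j \<in> p ` T" for j
    using node_of_in[OF that] T_subset by blast
  ultimately have "\<forall>j v. assigned j = Some v \<longrightarrow> v \<in> V \<and> in_nbrs E v \<subseteq> fst (loaded n_loads) j"
    and "(comp_reds T p nb, B) =
         (\<lambda>j. fst (loaded n_loads) j \<union> set_option (assigned j), snd (loaded n_loads))"
    unfolding assigned_def using set_nb node_of_in
    by (auto simp: fun_eq_iff comp_reds_eq loaded_def)
  then show ?thesis unfolding mpp_step_def using par_action_assigned by blast
qed

lemma save_step: "mpp_step V E k g (comp_reds T p nb, B) g (comp_reds T p nb, B \<union> T)"
proof -
  have "\<forall>j v. assigned j = Some v \<longrightarrow> v \<in> comp_reds T p nb j"
    unfolding assigned_def by (simp add: comp_reds_eq)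
  then show ?thesis unfolding mpp_step_def using par_action_assigned ran_assigned by auto
qed

lemma finite_comp_reds: "finite (comp_reds T p nb j)"
  by (simp add: comp_reds_eq)

lemma card_comp_reds_le: "card (comp_reds T p nb j) \<le> r"
proof (cases "j \<in> p ` T")
  case True
  then have "card (comp_reds T p nb j) \<le> length (node_of j # nb (node_of j))"
    unfolding comp_reds_eq using card_length[of "node_of j # nb (node_of j)"] by simp
  then show ?thesis using nb_fits[OF node_of_in[OF True]] by simp
qed (simp add: comp_reds_eq)

lemma set_del_order:
  "distinct (del_order k T p nb) \<and> set (del_order k T p nb) = Sigma {..<k} (comp_reds T p nb)"
proof -
  have "{(j, u). j < k \<and> u \<in> comp_reds T p nb j} = Sigma {..<k} (comp_reds T p nb)" by auto
  moreover have "finite (Sigma {..<k} (comp_reds T p nb))" by (simp add: finite_comp_reds)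
  ultimately show ?thesis
    unfolding del_order_def by (metis (mono_tags, lifting) finite_distinct_list someI_ex)
qed

definition deleted :: "nat \<Rightarrow> 'v conf" where
  "deleted m = ((\<lambda>j. comp_reds T p nb j - {u. (j, u) \<in> set (take m (del_order k T p nb))}), B \<union> T)"

lemma delete_step:
  assumes m: "m < length (del_order k T p nb)"
  shows "mpp_step V E k g (deleted m) 0 (deleted (Suc m))"
proof -
  let ?L = "del_order k T p nb"
  obtain j u where ju: "?L ! m = (j, u)" by fastforce
  then have "(j, u) \<in> set ?L" using m nth_mem by metis
  then have "j < k" "u \<in> comp_reds T p nb j" using set_del_order by auto
  moreover have "(j, u) \<notin> set (take m ?L)"
  proof -
    have "(j, u) \<in> set (drop m ?L)" using m ju by (simp add: Cons_nth_drop_Suc[symmetric])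
    then show ?thesis
      using set_del_order set_take_disj_set_drop_if_distinct[of ?L m m] by blast
  qed
  moreover have "take (Suc m) ?L = take m ?L @ [(j, u)]"
    using m ju by (simp add: take_Suc_conv_app_nth)
  ultimately have "u \<in> fst (deleted m) j" "j < k"
    and "deleted (Suc m) = ((fst (deleted m))(j := fst (deleted m) j - {u}), snd (deleted m))"
    unfolding deleted_def by (auto simp: fun_eq_iff)
  then show ?thesis unfolding mpp_step_def by blast
qed

lemma deleted_all: "deleted (length (del_order k T p nb)) = (\<lambda>_. {}, B \<union> T)"
proof -
  have "comp_reds T p nb j = {}" if "\<not> j < k" for j
    using that p_range by (auto simp: comp_reds_eq)
  then show ?thesis unfolding deleted_def using set_del_order by (auto simp: fun_eq_iff)
qed

lemma round_steps_eq:
  "round_steps k g T p nb B =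
     map (\<lambda>i. (g, loaded (Suc i))) [0..<n_loads]
     @ [(1, (comp_reds T p nb, B)), (g, (comp_reds T p nb, B \<union> T))]
     @ map (\<lambda>m. (0, deleted (Suc m))) [0..<length (del_order k T p nb)]"
  unfolding round_steps_def Let_def n_loads_def[symmetric] load_conf_eq_loaded deleted_def ..

lemma loaded_0: "loaded 0 = (\<lambda>_. {}, B)"
  unfolding loaded_def by (simp add: fun_eq_iff)

lemma deleted_0: "deleted 0 = (comp_reds T p nb, B \<union> T)"
  unfolding deleted_def by simp

lemma mpp_run_round_steps: "mpp_run V E k g (\<lambda>_. {}, B) (round_steps k g T p nb B)"
  unfolding round_steps_eq loaded_0[symmetric]
  using mpp_run_map_upt[of n_loads V E k g loaded, OF load_step]
    mpp_run_map_upt[of "length (del_order k T p nb)" V E k g deleted, OF delete_step]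
    compute_step save_step deleted_0 end_conf_map_upt[of loaded "\<lambda>_. g" n_loads]
  by (simp add: mpp_run_append)

lemma end_conf_round_steps: "end_conf (\<lambda>_. {}, B) (round_steps k g T p nb B) = (\<lambda>_. {}, B \<union> T)"
  unfolding round_steps_eq loaded_0[symmetric]
  using end_conf_map_upt[of deleted "\<lambda>_. 0" "length (del_order k T p nb)"] deleted_0 deleted_all
  by (simp add: end_conf_append end_conf_def)

lemma valid_round_steps: "\<forall>x\<in>set (round_steps k g T p nb B). valid_conf k r (snd x)"
proof -
  have "valid_conf k r (loaded i)" for i
  proof -
    have "card (set (take i (nb v))) \<le> r" if "v \<in> T" for v
      using card_length[of "take i (nb v)"] nb_fits[OF that] by simp
    then show ?thesis unfolding valid_conf_def loaded_def using node_of_in by simp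
  qed
  moreover have "valid_conf k r (comp_reds T p nb, X)" for X
    unfolding valid_conf_def using card_comp_reds_le by simp
  moreover have "valid_conf k r (deleted m)" for m
    unfolding valid_conf_def deleted_def
    using card_comp_reds_le finite_comp_reds by (auto intro: le_trans[OF card_mono])
  ultimately show ?thesis unfolding round_steps_eq by auto
qed

lemma strat_cost_round_steps: "strat_cost (round_steps k g T p nb B) = g * n_loads + 1 + g"
  unfolding round_steps_eq strat_cost_def by (simp add: sum_list_triv comp_def)

end

section \<open>The greedy strategy\<close>

lemma (in greedy_round) n_loads_le: "(\<And>v. v \<in> T \<Longrightarrow> length (nb v) \<le> M) \<Longrightarrow> n_loads \<le> M"
  unfolding n_loads_def using finite_T by simp

lemma length_le_max_indeg:
  assumes "is_dag V E" and "v \<in> V" and "distinct xs" and "set xs = in_nbrs E v"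
  shows "length xs \<le> max_indeg V E"
proof -
  have "length xs = card (in_nbrs E v)" using assms(3,4) by (metis distinct_card)
  also have "\<dots> \<le> max_indeg V E"
    unfolding max_indeg_def using assms(1,2) unfolding is_dag_def by simp
  finally show ?thesis .
qed

definition greedy_rounds ::
  "nat \<Rightarrow> nat \<Rightarrow> 'v set list \<Rightarrow> (nat \<Rightarrow> 'v \<Rightarrow> nat) \<Rightarrow> ('v \<Rightarrow> 'v list) \<Rightarrow> nat \<Rightarrow> (nat \<times> 'v conf) list"
  where
  "greedy_rounds k g Ts proc nb n =
     concat (map (\<lambda>t. round_steps k g (Ts ! t) (proc t) nb (done_before Ts t)) [0..<n])"

context
  fixes V :: "'v set" and E :: "('v \<times> 'v) set" and k r g :: nat
    and Ts :: "'v set list" and proc :: "nat \<Rightarrow> 'v \<Rightarrow> nat" and nb :: "'v \<Rightarrow> 'v list"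
  assumes dag: "is_dag V E"
    and r: "r \<ge> max_indeg V E + 1"
    and sched: "nonidle_greedy_schedule V E k Ts"
    and proc: "\<forall>t < length Ts. inj_on (proc t) (Ts ! t) \<and> proc t ` (Ts ! t) \<subseteq> {..<k}"
    and nb: "\<forall>v \<in> V. distinct (nb v) \<and> set (nb v) = in_nbrs E v"
begin

lemma length_nb_le_max_indeg: "v \<in> V \<Longrightarrow> length (nb v) \<le> max_indeg V E"
  using length_le_max_indeg[OF dag] nb by blast

lemma greedy_round_nth:
  assumes t: "t < length Ts"
  shows "greedy_round V E k r (Ts ! t) (proc t) nb (done_before Ts t)"
proof
  have finV: "finite V" using dag unfolding is_dag_def by simp
  show "Ts ! t \<subseteq> V" using schedule_nth_subset[OF sched t] .
  then show "finite (Ts ! t)" using finV by (rule finite_subset)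
  show "Ts ! t \<noteq> {}" and "\<And>v. v \<in> Ts ! t \<Longrightarrow> in_nbrs E v \<subseteq> done_before Ts t"
    using sched t unfolding nonidle_greedy_schedule_def by auto
  show "inj_on (proc t) (Ts ! t)" and "proc t ` (Ts ! t) \<subseteq> {..<k}" using proc t by auto
  show "\<And>v. v \<in> Ts ! t \<Longrightarrow> set (nb v) = in_nbrs E v"
    and "\<And>v. v \<in> Ts ! t \<Longrightarrow> length (nb v) + 1 \<le> r"
    using nb r length_nb_le_max_indeg \<open>Ts ! t \<subseteq> V\<close> by fastforce+
qed

lemma greedy_rounds_run:
  "n \<le> length Ts \<Longrightarrow>
   mpp_run V E k g init_conf (greedy_rounds k g Ts proc nb n) \<and>
   end_conf init_conf (greedy_rounds k g Ts proc nb n) = (\<lambda>_. {}, done_before Ts n)"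
proof (induction n)
  case 0
  then show ?case by (simp add: greedy_rounds_def init_conf_def end_conf_def done_before_def)
next
  case (Suc n)
  then interpret greedy_round V E k r g "Ts ! n" "proc n" nb "done_before Ts n"
    using greedy_round_nth by simp
  show ?case
    using Suc mpp_run_round_steps end_conf_round_steps
    by (simp add: greedy_rounds_def mpp_run_append end_conf_append done_before_Suc)
qed

lemma greedy_strategy_eq: "greedy_strategy k g Ts proc nb = greedy_rounds k g Ts proc nb (length Ts)"
  unfolding greedy_strategy_def greedy_rounds_def ..

lemma valid_greedy_strategy: "\<forall>x\<in>set (greedy_strategy k g Ts proc nb). valid_conf k r (snd x)"
  unfolding greedy_strategy_def using greedy_round.valid_round_steps[OF greedy_round_nth] by auto

lemma strat_cost_greedy_strategy:
  "strat_cost (greedy_strategy k g Ts proc nb) \<le> length Ts * (g * max_indeg V E + 1 + g)"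
proof -
  let ?M = "g * max_indeg V E + 1 + g"
  have round_cost: "strat_cost (round_steps k g (Ts ! t) (proc t) nb (done_before Ts t)) \<le> ?M"
    if t: "t \<in> set [0..<length Ts]" for t
  proof -
    interpret greedy_round V E k r g "Ts ! t" "proc t" nb "done_before Ts t"
      using greedy_round_nth t by simp
    have "n_loads \<le> max_indeg V E"
      using n_loads_le length_nb_le_max_indeg T_subset by blast
    then show ?thesis unfolding strat_cost_round_steps by simp
  qed
  have "strat_cost (greedy_strategy k g Ts proc nb) =
        (\<Sum>t\<leftarrow>[0..<length Ts]. strat_cost (round_steps k g (Ts ! t) (proc t) nb (done_before Ts t)))"
    unfolding greedy_strategy_def strat_cost_concat by (simp add: comp_def)
  also have "\<dots> \<le> (\<Sum>t\<leftarrow>[0..<length Ts]. ?M)" using round_cost by (rule sum_list_mono)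
  finally show ?thesis by (simp add: sum_list_triv)
qed

lemma is_strategy_greedy_strategy: "is_strategy V E k r g (greedy_strategy k g Ts proc nb)"
proof -
  have "done_before Ts (length Ts) = V"
    using sched unfolding done_before_length nonidle_greedy_schedule_def by simp
  then show ?thesis
    unfolding is_strategy_iff_mpp_run greedy_strategy_eq
    using greedy_rounds_run[of "length Ts"] valid_greedy_strategy
    by (auto simp: greedy_strategy_eq strat_confs_def valid_conf_def init_conf_def
        terminal_conf_def sinks_def)
qed

end

theorem lemma3:
  fixes V :: "'v set" and E :: "('v \<times> 'v) set" and k r g :: nat
    and Ts :: "'v set list" and proc :: "nat \<Rightarrow> 'v \<Rightarrow> nat" and nb :: "'v \<Rightarrow> 'v list"
  assumes "is_dag V E"
    and "k > 0" and "g > 0" and "r > 0"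
    and "r \<ge> max_indeg V E + 1"
    and "nonidle_greedy_schedule V E k Ts"
    and "\<forall>t < length Ts. inj_on (proc t) (Ts ! t) \<and> proc t ` (Ts ! t) \<subseteq> {..<k}"
    and "\<forall>v \<in> V. distinct (nb v) \<and> set (nb v) = in_nbrs E v"
  shows "is_strategy V E k r g (greedy_strategy k g Ts proc nb) \<and>
         strat_cost (greedy_strategy k g Ts proc nb)
           \<le> 2 * (g * (max_indeg V E + 1) + 1) * OPT V E k r g"
proof -
  let ?S = "greedy_strategy k g Ts proc nb"
  have strat: "is_strategy V E k r g ?S"
    using is_strategy_greedy_strategy[OF assms(1,5-8)] .
  obtain ss where "is_strategy V E k r g ss" and "strat_cost ss = OPT V E k r g"
    using OPT_attained[OF strat] .
  then have rounds: "length Ts \<le> 2 * OPT V E k r g"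
    using length_le_twice_strat_cost[OF assms(1,2,6)] by metis
  have "strat_cost ?S \<le> length Ts * (g * max_indeg V E + 1 + g)"
    using strat_cost_greedy_strategy[OF assms(1,5-8)] .
  also have "\<dots> \<le> 2 * OPT V E k r g * (g * max_indeg V E + 1 + g)"
    using rounds by (rule mult_le_mono1)
  also have "\<dots> = 2 * (g * (max_indeg V E + 1) + 1) * OPT V E k r g"
    by (simp add: algebra_simps)
  finally show ?thesis using strat by simp
qed

end
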